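(* Let $\bm A=(A_1,\dots,A_{d_1})$ be pairwise commuting Hermitian matrices in $M_n(\mathbb{C})$, let $\bm B=(B_1,\dots,B_{d_2})$ and $\bm C=(C_1,\dots,C_{d_2})$ be tuples of matrices in $M_n(\mathbb{C})$, and let $(\bm\lambda,\bm\nu)\in\mathbb{R}^{d_1}\times\mathbb{C}^{d_2}$. Assume $Z^2:=\sum_{i=1}^{d_1}(A_i-\lambda_iI)^2$ is invertible and let $Z$ be its positive definite square root. If $$\Big\|Z^{-1}\Big(\sum_{j=1}^{d_2}(B_j-\nu_jI)^\dagger C_j+C_j^\dagger(B_j-\nu_jI)+C_j^\dagger C_j\Big)Z^{-1}\Big\|\le K$$ for some $K<1$, then $$(1-K)^{1/2}\mu^{RQ}_{(\bm\lambda,\bm\nu)}(\bm A,\bm B)\le\mu^{RQ}_{(\bm\lambda,\bm\nu)}(\bm A,\bm B+\bm C)\le(1+K)^{1/2}\mu^{RQ}_{(\bm\lambda,\bm\nu)}(\bm A,\bm B),$$ where $\bm B+\bm C=(B_1+C_1,\dots,B_{d_2}+C_{d_2})$.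
   Context: For $\bm A=(A_1,\dots,A_{d_1})$ with $A_i\in M_n(\mathbb{C})$ Hermitian, $\bm B=(B_1,\dots,B_{d_2})$ with $B_j\in M_n(\mathbb{C})$ arbitrary, and $(\bm\lambda,\bm\nu)\in\mathbb{R}^{d_1}\times\mathbb{C}^{d_2}$, the right quadratic composite operator is $RQ_{(\bm\lambda,\bm\nu)}(\bm A,\bm B)=\sum_{i=1}^{d_1}(A_i-\lambda_iI)^2+\sum_{j=1}^{d_2}(B_j-\nu_jI)^\dagger(B_j-\nu_jI)$, and the right quadratic gap is $\mu^{RQ}_{(\bm\lambda,\bm\nu)}(\bm A,\bm B)=\sqrt{\lambda_{\min}\big(RQ_{(\bm\lambda,\bm\nu)}(\bm A,\bm B)\big)}$ (square root of the smallest eigenvalue). Matrix norms are operator norms. *)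

theory Defs
  imports "HOL-Analysis.Analysis"
begin

text \<open>Square complex matrices of size n are represented as complex^'n^'n, the
size being the finite index type 'n.  Tuples of matrices are functions
nat => matrix, with the relevant indices i < d.\<close>

definition cmat_adj :: "complex^'n^'m \<Rightarrow> complex^'m^'n" where
  "cmat_adj M = (\<chi> i j. cnj (M $ j $ i))"

definition hermitian_cmat :: "complex^'n^'n \<Rightarrow> bool" where
  "hermitian_cmat M \<longleftrightarrow> cmat_adj M = M"

definition cinner_vec :: "complex^'n \<Rightarrow> complex^'n \<Rightarrow> complex" where
  "cinner_vec v w = (\<Sum>i\<in>UNIV. cnj (v $ i) * w $ i)"

definition posdef_cmat :: "complex^'n^'n \<Rightarrow> bool" where
  "posdef_cmat M \<longleftrightarrow> hermitian_cmat M \<and>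
     (\<forall>v. v \<noteq> 0 \<longrightarrow> 0 < Re (cinner_vec v (M *v v)))"

definition opnorm :: "complex^'n^'m \<Rightarrow> real" where
  "opnorm M = onorm (\<lambda>v. M *v v)"

text \<open>Smallest eigenvalue of a Hermitian matrix (its eigenvalues are real).\<close>
definition lambda_min :: "complex^'n^'n \<Rightarrow> real" where
  "lambda_min M = Min {r::real. \<exists>v. v \<noteq> 0 \<and> M *v v = complex_of_real r *s v}"

definition RQ :: "nat \<Rightarrow> nat \<Rightarrow> (nat \<Rightarrow> real) \<Rightarrow> (nat \<Rightarrow> complex)
     \<Rightarrow> (nat \<Rightarrow> complex^'n^'n) \<Rightarrow> (nat \<Rightarrow> complex^'n^'n) \<Rightarrow> complex^'n^'n" where
  "RQ d1 d2 lam nu A B =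
     (\<Sum>i<d1. (A i - mat (complex_of_real (lam i))) ** (A i - mat (complex_of_real (lam i))))
   + (\<Sum>j<d2. cmat_adj (B j - mat (nu j)) ** (B j - mat (nu j)))"

definition mu_RQ :: "nat \<Rightarrow> nat \<Rightarrow> (nat \<Rightarrow> real) \<Rightarrow> (nat \<Rightarrow> complex)
     \<Rightarrow> (nat \<Rightarrow> complex^'n^'n) \<Rightarrow> (nat \<Rightarrow> complex^'n^'n) \<Rightarrow> real" where
  "mu_RQ d1 d2 lam nu A B = sqrt (lambda_min (RQ d1 d2 lam nu A B))"

end

theory Submission
  imports Defs
begin

text \<open>For $v \ne 0$ the Rayleigh quotient of $RQ(\bm A,\bm B+\bm C)$ differs from that of
$RQ(\bm A,\bm B)$ by $\langle v, Dv\rangle$, where $D$ is the matrix inside the norm.  Writing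
$w = Zv$, this is $\langle w, Z^{-1}DZ^{-1}w\rangle$, of modulus at most $K\|Zv\|^2 =
K\langle v, Z^2 v\rangle \le K\langle v, RQ(\bm A,\bm B)v\rangle$.  Hence the two quadratic forms are
comparable within the factors $1 \pm K$, and so are their minima over the unit sphere, which
are the smallest eigenvalues.  Commutativity of the $A_i$ is only needed for the existence of
$Z$, which the statement assumes.\<close>

lemma matrix_inv_inverse:
  fixes A :: "'a::semiring_1^'n^'n"
  assumes "invertible A"
  shows "A ** matrix_inv A = mat 1 \<and> matrix_inv A ** A = mat 1"
  using assms unfolding invertible_def matrix_inv_def by (rule someI_ex)

lemma invertible_mult_imp_left:
  fixes A B :: "'a::field^'n^'n"
  assumes "invertible (A ** B)"
  shows "invertible A"
proof -
  obtain X where "A ** B ** X = mat 1"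
    using assms unfolding invertible_def by blast
  then show ?thesis
    unfolding invertible_right_inverse by (metis matrix_mul_assoc)
qed

lemma sum_matrix_vector_mult: "sum f S *v v = (\<Sum>i\<in>S. f i *v v)"
  by (induction S rule: infinite_finite_induct) (simp_all add: matrix_vector_mult_add_rdistrib)

lemma mat_matrix_vector_mult: "mat c *v (v::'a::comm_ring_1^'n) = c *s v"
proof -
  have "\<And>i j. (if i = j then c else 0) * v$j = (if i = j then c * v$j else 0)" by simp
  then show ?thesis by (simp add: vec_eq_iff matrix_vector_mult_def mat_def)
qed

lemma of_real_vector_smult: "complex_of_real r *s (w::complex^'n) = r *\<^sub>R w"
  by (simp add: vec_eq_iff) (simp add: scaleR_conv_of_real)

lemma matrix_vector_mult_scaleR_complex: "(M::complex^'n^'m) *v (t *\<^sub>R w) = t *\<^sub>R (M *v w)"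
  by (simp add: linear_scale)

lemma cmat_adj_inner:
  fixes M :: "complex^'n^'m" and v :: "complex^'m" and w :: "complex^'n"
  shows "(cmat_adj M *v v) \<bullet> w = v \<bullet> (M *v w)"
proof -
  have "(cmat_adj M *v v) \<bullet> w = (\<Sum>j\<in>UNIV. \<Sum>i\<in>UNIV. (cnj (M$i$j) * v$i) \<bullet> w$j)"
    by (simp add: inner_vec_def matrix_vector_mult_def cmat_adj_def inner_sum_left)
  also have "\<dots> = (\<Sum>i\<in>UNIV. \<Sum>j\<in>UNIV. (cnj (M$i$j) * v$i) \<bullet> w$j)"
    by (rule sum.swap)
  also have "\<dots> = (\<Sum>i\<in>UNIV. \<Sum>j\<in>UNIV. v$i \<bullet> (M$i$j * w$j))"
    by (intro sum.cong refl) (simp add: inner_complex_def algebra_simps)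
  also have "\<dots> = v \<bullet> (M *v w)"
    by (simp add: inner_vec_def matrix_vector_mult_def inner_sum_right)
  finally show ?thesis .
qed

lemma inner_cmat_adj_mult:
  fixes E F :: "complex^'n^'n"
  shows "u \<bullet> ((cmat_adj E ** F) *v w) = (E *v u) \<bullet> (F *v w)"
  by (metis cmat_adj_inner inner_commute matrix_vector_mul_assoc)

text \<open>The inner product on \<open>complex^'n\<close> is the real part of the Hermitian one, so this is
symmetry of \<open>M\<close> as a real-linear map of $\mathbb{R}^{2n}$.\<close>
definition inner_symmetric :: "complex^'n^'n \<Rightarrow> bool" where
  "inner_symmetric M \<longleftrightarrow> (\<forall>u w. u \<bullet> (M *v w) = (M *v u) \<bullet> w)"

lemma inner_symmetricD: "inner_symmetric M \<Longrightarrow> u \<bullet> (M *v w) = (M *v u) \<bullet> w"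
  unfolding inner_symmetric_def by blast

lemma hermitian_imp_inner_symmetric: "hermitian_cmat M \<Longrightarrow> inner_symmetric M"
  unfolding inner_symmetric_def hermitian_cmat_def by (metis cmat_adj_inner)

lemma inner_symmetric_add: "inner_symmetric M \<Longrightarrow> inner_symmetric N \<Longrightarrow> inner_symmetric (M + N)"
  unfolding inner_symmetric_def
  by (simp add: matrix_vector_mult_add_rdistrib inner_add_left inner_add_right)

lemma inner_symmetric_diff: "inner_symmetric M \<Longrightarrow> inner_symmetric N \<Longrightarrow> inner_symmetric (M - N)"
  unfolding inner_symmetric_def
  by (simp add: matrix_vector_mult_diff_rdistrib inner_diff_left inner_diff_right)

lemma inner_symmetric_sum: "(\<And>i. i \<in> S \<Longrightarrow> inner_symmetric (f i)) \<Longrightarrow> inner_symmetric (sum f S)"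
  by (induction S rule: infinite_finite_induct)
     (simp_all add: inner_symmetric_add, simp_all add: inner_symmetric_def)

lemma inner_symmetric_mat_of_real: "inner_symmetric (mat (complex_of_real c))"
  unfolding inner_symmetric_def
  by (simp add: mat_matrix_vector_mult of_real_vector_smult inner_commute)

lemma inner_symmetric_square: "inner_symmetric P \<Longrightarrow> inner_symmetric (P ** P)"
  unfolding inner_symmetric_def by (simp flip: matrix_vector_mul_assoc)

lemma inner_symmetric_cmat_adj_mult_self: "inner_symmetric (cmat_adj E ** (E::complex^'n^'n))"
proof -
  have "u \<bullet> (cmat_adj E ** E *v w) = w \<bullet> (cmat_adj E ** E *v u)" for u w :: "complex^'n"
    unfolding inner_cmat_adj_mult by (rule inner_commute)
  then show ?thesis
    unfolding inner_symmetric_def by (simp add: inner_commute)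
qed

text \<open>A positive semidefinite symmetric operator vanishes wherever its quadratic form does:
otherwise moving from \<open>x\<close> along \<open>f x\<close> would make the form negative.\<close>
lemma psd_form_zero_imp_zero:
  fixes f :: "'a::real_inner \<Rightarrow> 'a"
  assumes lin: "linear f"
    and sym: "\<And>x y. x \<bullet> f y = f x \<bullet> y"
    and psd: "\<And>x. 0 \<le> x \<bullet> f x"
    and zero: "x \<bullet> f x = 0"
  shows "f x = 0"
proof -
  define a where "a = f x \<bullet> f x"
  define r where "r = f x \<bullet> f (f x)"
  have r_nonneg: "0 \<le> r" unfolding r_def by (rule psd)
  have form_along: "0 \<le> 2 * t * a + t * t * r" for t
  proof -
    have "(x + t *\<^sub>R f x) \<bullet> f (x + t *\<^sub>R f x)
        = x \<bullet> f x + t * (x \<bullet> f (f x)) + t * (f x \<bullet> f x) + t * t * r"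
      by (simp add: linear_add[OF lin] linear_scale[OF lin] inner_add_left inner_add_right
          algebra_simps r_def)
    also have "x \<bullet> f (f x) = a" by (simp add: sym a_def)
    finally show ?thesis using psd[of "x + t *\<^sub>R f x"] zero by (simp add: a_def)
  qed
  define t where "t = - a / (r + 1)"
  have tr: "t * (r + 1) = - a" using r_nonneg by (simp add: t_def)
  have "0 \<le> (r + 1)\<^sup>2 * (2 * t * a + t * t * r)" using form_along by simp
  also have "\<dots> = 2 * a * (t * (r + 1)) * (r + 1) + (t * (r + 1)) * (t * (r + 1)) * r"
    by (simp add: power2_eq_square algebra_simps)
  also have "\<dots> = - (a * a * (r + 2))" unfolding tr by (simp add: algebra_simps)
  finally have "a * a * (r + 2) \<le> 0" by simp
  then have "a * a \<le> 0" using r_nonneg by (simp add: mult_le_0_iff)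
  then have "a = 0" by (metis antisym mult_eq_0_iff zero_le_square)
  then show ?thesis by (simp add: a_def)
qed

text \<open>A minimiser \<open>v\<close> of the form on the unit sphere, with minimum \<open>m\<close>, is a zero of the
quadratic form of \<open>M - m\<close>, hence an eigenvector by the previous lemma.\<close>
lemma inner_symmetric_min_eigenvector:
  fixes M :: "complex^'n^'n"
  assumes sym: "inner_symmetric M"
  obtains m v where "v \<noteq> 0" "M *v v = complex_of_real m *s v"
    and "\<And>u. m * (u \<bullet> u) \<le> u \<bullet> (M *v u)"
proof -
  define q where "q u = u \<bullet> (M *v u)" for u :: "complex^'n"
  have "continuous_on (sphere 0 1) q"
    unfolding q_def by (intro continuous_intros linear_continuous_on matrix_vector_mul_bounded_linear)
  then obtain v where v_unit: "v \<in> sphere 0 1" and v_min: "\<forall>y\<in>sphere 0 1. q v \<le> q y"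
    using continuous_attains_inf[OF compact_sphere, of "0::complex^'n" 1 q] by auto
  define m where "m = q v"
  have v_inner: "v \<bullet> v = 1" using v_unit by (simp add: dot_square_norm)
  have q_scale: "q (c *\<^sub>R u) = c * c * q u" for c u
    by (simp add: q_def matrix_vector_mult_scaleR_complex)
  have rayleigh: "m * (u \<bullet> u) \<le> q u" for u
  proof (cases "u = 0")
    case True then show ?thesis by (simp add: q_def)
  next
    case False
    define c where "c = 1 / norm u"
    have "c *\<^sub>R u \<in> sphere 0 1" using False by (simp add: c_def)
    then have "m \<le> q (c *\<^sub>R u)" using v_min m_def by blast
    then have "m \<le> c * c * q u" by (simp only: q_scale)
    then have "m * (norm u * norm u) \<le> (c * norm u) * (c * norm u) * q u"
      using False by (simp add: algebra_simps mult_right_mono)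
    also have "c * norm u = 1" using False by (simp add: c_def)
    finally show ?thesis by (simp add: dot_square_norm power2_eq_square)
  qed
  define G where "G u = M *v u - m *\<^sub>R u" for u
  have "G v = 0"
  proof (rule psd_form_zero_imp_zero[where f = G])
    show "linear G"
      unfolding G_def by (intro bounded_linear.linear bounded_linear_sub matrix_vector_mul_bounded_linear
          bounded_linear_scaleR_right)
    show "x \<bullet> G y = G x \<bullet> y" for x y
      using sym unfolding inner_symmetric_def G_def by (simp add: inner_diff_left inner_diff_right)
    show "0 \<le> x \<bullet> G x" for x
      using rayleigh[of x] by (simp add: G_def q_def inner_diff_right)
    show "v \<bullet> G v = 0"
      using v_inner by (simp add: G_def q_def inner_diff_right m_def)
  qed
  then have "M *v v = complex_of_real m *s v" by (simp add: G_def of_real_vector_smult)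
  moreover have "v \<noteq> 0" using v_inner by auto
  ultimately show ?thesis using that rayleigh unfolding q_def by blast
qed

text \<open>Eigenvectors for distinct real eigenvalues are orthogonal, so there are at most
finitely many such eigenvalues.\<close>
lemma inner_symmetric_finite_real_eigenvalues:
  fixes M :: "complex^'n^'n"
  assumes sym: "inner_symmetric M"
  shows "finite {r::real. \<exists>v. v \<noteq> 0 \<and> M *v v = complex_of_real r *s v}" (is "finite ?S")
proof -
  define ev where "ev r = (SOME v. v \<noteq> 0 \<and> M *v v = complex_of_real r *s v)" for r
  have ev: "ev r \<noteq> 0 \<and> M *v ev r = r *\<^sub>R ev r" if "r \<in> ?S" for r
  proof -
    have "ev r \<noteq> 0 \<and> M *v ev r = complex_of_real r *s ev r"
      using that unfolding ev_def mem_Collect_eq by (rule someI_ex)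
    then show ?thesis by (simp add: of_real_vector_smult)
  qed
  have orth: "orthogonal (ev r) (ev s)" if "r \<in> ?S" "s \<in> ?S" "r \<noteq> s" for r s
  proof -
    have "r * (ev r \<bullet> ev s) = (M *v ev r) \<bullet> ev s" using ev[OF that(1)] by simp
    also have "\<dots> = ev r \<bullet> (M *v ev s)" using inner_symmetricD[OF sym] by simp
    also have "\<dots> = s * (ev r \<bullet> ev s)" using ev[OF that(2)] by simp
    finally have "(r - s) * (ev r \<bullet> ev s) = 0" by (simp add: left_diff_distrib)
    then show ?thesis using that(3) by (simp add: orthogonal_def)
  qed
  have "pairwise orthogonal (ev ` ?S)"
  proof (rule pairwise_imageI)
    fix r s assume "r \<in> ?S" "s \<in> ?S" "r \<noteq> s"
    then show "orthogonal (ev r) (ev s)" by (rule orth)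
  qed
  then have "finite (ev ` ?S)" by (rule pairwise_orthogonal_imp_finite)
  moreover have "inj_on ev ?S"
  proof (rule inj_onI)
    fix r s assume rs: "r \<in> ?S" "s \<in> ?S" "ev r = ev s"
    have "r *\<^sub>R ev r = M *v ev s" using ev[OF rs(1)] rs(3) by simp
    also have "\<dots> = s *\<^sub>R ev r" using ev[OF rs(2)] rs(3) by simp
    finally show "r = s" using ev[OF rs(1)] by simp
  qed
  ultimately show ?thesis by (rule finite_imageD)
qed

lemma lambda_min_inner_symmetric:
  fixes M :: "complex^'n^'n"
  assumes sym: "inner_symmetric M"
  shows lambda_min_le_rayleigh: "lambda_min M * (u \<bullet> u) \<le> u \<bullet> (M *v u)"
    and lambda_min_attained: "\<exists>v. v \<noteq> 0 \<and> v \<bullet> (M *v v) = lambda_min M * (v \<bullet> v)"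
proof -
  obtain m v where v: "v \<noteq> 0" "M *v v = complex_of_real m *s v"
    and rayleigh: "\<And>u. m * (u \<bullet> u) \<le> u \<bullet> (M *v u)"
    using inner_symmetric_min_eigenvector[OF sym] by blast
  have "m \<le> r" if "v' \<noteq> 0" "M *v v' = complex_of_real r *s v'" for r v'
  proof -
    have "m * (v' \<bullet> v') \<le> r * (v' \<bullet> v')"
      using rayleigh[of v'] that(2) by (simp add: of_real_vector_smult)
    then show ?thesis using that(1) by simp
  qed
  then have "lambda_min M = m"
    unfolding lambda_min_def using inner_symmetric_finite_real_eigenvalues[OF sym] v
    by (intro Min_eqI) auto
  then show "lambda_min M * (u \<bullet> u) \<le> u \<bullet> (M *v u)"
    and "\<exists>v. v \<noteq> 0 \<and> v \<bullet> (M *v v) = lambda_min M * (v \<bullet> v)"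
    using rayleigh v by (auto simp: of_real_vector_smult intro!: exI[of _ v])
qed

lemma lambda_min_scaled_le:
  fixes M N :: "complex^'n^'n"
  assumes "inner_symmetric M" "inner_symmetric N" "0 \<le> c"
    and "\<And>v. c * (v \<bullet> (M *v v)) \<le> v \<bullet> (N *v v)"
  shows "c * lambda_min M \<le> lambda_min N"
proof -
  obtain v where v: "v \<noteq> 0" "v \<bullet> (N *v v) = lambda_min N * (v \<bullet> v)"
    using lambda_min_attained[OF assms(2)] by blast
  have "(c * lambda_min M) * (v \<bullet> v) \<le> c * (v \<bullet> (M *v v))"
    using lambda_min_le_rayleigh[OF assms(1)] assms(3) by (simp add: mult.assoc mult_left_mono)
  also have "\<dots> \<le> lambda_min N * (v \<bullet> v)" using assms(4)[of v] v(2) by simp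
  finally show ?thesis using v(1) by simp
qed

lemma lambda_min_le_scaled:
  fixes M N :: "complex^'n^'n"
  assumes "inner_symmetric M" "inner_symmetric N"
    and "\<And>v. v \<bullet> (N *v v) \<le> c * (v \<bullet> (M *v v))"
  shows "lambda_min N \<le> c * lambda_min M"
proof -
  obtain v where v: "v \<noteq> 0" "v \<bullet> (M *v v) = lambda_min M * (v \<bullet> v)"
    using lambda_min_attained[OF assms(1)] by blast
  have "lambda_min N * (v \<bullet> v) \<le> v \<bullet> (N *v v)" by (rule lambda_min_le_rayleigh[OF assms(2)])
  also have "\<dots> \<le> c * (v \<bullet> (M *v v))" by (rule assms(3))
  also have "\<dots> = (c * lambda_min M) * (v \<bullet> v)" using v(2) by simp
  finally show ?thesis using v(1) by simp
qed

lemma opnorm_nonneg: "0 \<le> opnorm (M::complex^'n^'m)"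
  unfolding opnorm_def by (rule onorm_pos_le[OF matrix_vector_mul_bounded_linear])

lemma opnorm_bound: "norm (M *v v) \<le> opnorm M * norm (v::complex^'n)"
  unfolding opnorm_def by (rule onorm[OF matrix_vector_mul_bounded_linear])

text \<open>With \<open>w = Z v\<close> the form of \<open>D\<close> at \<open>v\<close> is the form of \<open>Z\<inverse> D Z\<inverse>\<close> at \<open>w\<close>.\<close>
lemma abs_inner_le_opnorm_congruence:
  fixes D Z :: "complex^'n^'n"
  assumes herm: "hermitian_cmat Z" and inv: "invertible Z"
    and bound: "opnorm (matrix_inv Z ** D ** matrix_inv Z) \<le> K"
  shows "\<bar>v \<bullet> (D *v v)\<bar> \<le> K * (norm (Z *v v))\<^sup>2"
proof -
  define w where "w = Z *v v"
  define Zi where "Zi = matrix_inv Z"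
  have Z_Zi: "Z ** Zi = mat 1" and Zi_Z: "Zi ** Z = mat 1"
    using matrix_inv_inverse[OF inv] by (simp_all add: Zi_def)
  have sym: "inner_symmetric Z" using herm by (rule hermitian_imp_inner_symmetric)
  have "(Zi ** D ** Zi) *v w = Zi *v (D *v ((Zi ** Z) *v v))"
    by (simp add: w_def flip: matrix_vector_mul_assoc)
  then have "w \<bullet> ((Zi ** D ** Zi) *v w) = (Z *v v) \<bullet> (Zi *v (D *v v))"
    by (simp add: Zi_Z w_def)
  also have "\<dots> = v \<bullet> (Z *v (Zi *v (D *v v)))"
    by (rule inner_symmetricD[OF sym, symmetric])
  finally have form: "w \<bullet> ((Zi ** D ** Zi) *v w) = v \<bullet> (D *v v)"
    by (simp add: matrix_vector_mul_assoc matrix_mul_assoc Z_Zi)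
  have "\<bar>w \<bullet> ((Zi ** D ** Zi) *v w)\<bar> \<le> norm w * norm ((Zi ** D ** Zi) *v w)"
    by (rule Cauchy_Schwarz_ineq2)
  also have "\<dots> \<le> norm w * (K * norm w)"
  proof (intro mult_left_mono)
    have "norm ((Zi ** D ** Zi) *v w) \<le> opnorm (Zi ** D ** Zi) * norm w" by (rule opnorm_bound)
    also have "\<dots> \<le> K * norm w" using bound by (simp add: Zi_def mult_right_mono)
    finally show "norm ((Zi ** D ** Zi) *v w) \<le> K * norm w" .
  qed simp
  finally show ?thesis
    unfolding form[symmetric] w_def[symmetric] by (simp add: power2_eq_square mult_ac)
qed

lemma inner_symmetric_RQ:
  assumes "\<forall>i<d1. hermitian_cmat (A i)"
  shows "inner_symmetric (RQ d1 d2 lam nu A B)"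
  unfolding RQ_def using assms
  by (intro inner_symmetric_add inner_symmetric_sum inner_symmetric_square inner_symmetric_diff
      hermitian_imp_inner_symmetric inner_symmetric_mat_of_real inner_symmetric_cmat_adj_mult_self)
     auto

lemma inner_RQ:
  "v \<bullet> (RQ d1 d2 lam nu A B *v v)
    = v \<bullet> ((\<Sum>i<d1. (A i - mat (complex_of_real (lam i))) ** (A i - mat (complex_of_real (lam i)))) *v v)
      + (\<Sum>j<d2. (norm ((B j - mat (nu j)) *v v))\<^sup>2)"
  by (simp add: RQ_def matrix_vector_mult_add_rdistrib inner_add_right sum_matrix_vector_mult
      inner_sum_right inner_cmat_adj_mult dot_square_norm)

lemma inner_cmat_adj_square_add:
  fixes E F :: "complex^'n^'n"
  shows "v \<bullet> ((cmat_adj (E + F) ** (E + F)) *v v)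
    = v \<bullet> ((cmat_adj E ** E) *v v) + v \<bullet> ((cmat_adj E ** F + cmat_adj F ** E + cmat_adj F ** F) *v v)"
  by (simp add: inner_cmat_adj_mult matrix_vector_mult_add_rdistrib inner_add_left inner_add_right)

lemma inner_RQ_add:
  "v \<bullet> (RQ d1 d2 lam nu A (\<lambda>j. B j + C j) *v v)
    = v \<bullet> (RQ d1 d2 lam nu A B *v v)
      + v \<bullet> ((\<Sum>j<d2. cmat_adj (B j - mat (nu j)) ** C j + cmat_adj (C j) ** (B j - mat (nu j))
               + cmat_adj (C j) ** C j) *v v)"
proof -
  let ?X = "\<Sum>i<d1. (A i - mat (complex_of_real (lam i))) ** (A i - mat (complex_of_real (lam i)))"
  define E where "E j = B j - mat (nu j)" for j
  have shift: "B j + C j - mat (nu j) = E j + C j" for j by (simp add: E_def)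
  have "v \<bullet> (RQ d1 d2 lam nu A (\<lambda>j. B j + C j) *v v)
      = v \<bullet> (?X *v v) + (\<Sum>j<d2. v \<bullet> ((cmat_adj (E j + C j) ** (E j + C j)) *v v))"
    unfolding RQ_def shift
    by (simp only: matrix_vector_mult_add_rdistrib inner_add_right sum_matrix_vector_mult inner_sum_right)
  also have "\<dots> = v \<bullet> (?X *v v) + (\<Sum>j<d2. v \<bullet> ((cmat_adj (E j) ** E j) *v v))
      + (\<Sum>j<d2. v \<bullet> ((cmat_adj (E j) ** C j + cmat_adj (C j) ** E j + cmat_adj (C j) ** C j) *v v))"
    by (simp only: inner_cmat_adj_square_add sum.distrib add.assoc)
  also have "\<dots> = v \<bullet> (RQ d1 d2 lam nu A B *v v)
      + v \<bullet> ((\<Sum>j<d2. cmat_adj (E j) ** C j + cmat_adj (C j) ** E j + cmat_adj (C j) ** C j) *v v)"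
    unfolding RQ_def E_def
    by (simp only: matrix_vector_mult_add_rdistrib inner_add_right sum_matrix_vector_mult inner_sum_right)
  finally show ?thesis by (simp only: E_def)
qed

lemma norm_square_root_le_inner_RQ:
  assumes herm: "hermitian_cmat Z"
    and Z_sq: "Z ** Z = (\<Sum>i<d1. (A i - mat (complex_of_real (lam i))) ** (A i - mat (complex_of_real (lam i))))"
  shows "(norm (Z *v v))\<^sup>2 \<le> v \<bullet> (RQ d1 d2 lam nu A B *v v)"
proof -
  have "(norm (Z *v v))\<^sup>2 = v \<bullet> ((Z ** Z) *v v)"
    by (simp add: dot_square_norm [symmetric] inner_symmetricD[OF hermitian_imp_inner_symmetric[OF herm]]
        flip: matrix_vector_mul_assoc)
  also have "\<dots> \<le> v \<bullet> (RQ d1 d2 lam nu A B *v v)"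
    unfolding inner_RQ Z_sq by (simp add: sum_nonneg)
  finally show ?thesis .
qed

theorem mainTheorem14:
  fixes A B C :: "nat \<Rightarrow> complex^'n^'n"
    and Z :: "complex^'n^'n"
    and d1 d2 :: nat
    and lam :: "nat \<Rightarrow> real" and nu :: "nat \<Rightarrow> complex"
    and K :: real
  assumes herm: "\<forall>i<d1. hermitian_cmat (A i)"
    and comm: "\<forall>i<d1. \<forall>j<d1. A i ** A j = A j ** A i"
    and Z2_inv: "invertible (\<Sum>i<d1. (A i - mat (complex_of_real (lam i))) ** (A i - mat (complex_of_real (lam i))))"
    and Z_pd: "posdef_cmat Z"
    and Z_sq: "Z ** Z = (\<Sum>i<d1. (A i - mat (complex_of_real (lam i))) ** (A i - mat (complex_of_real (lam i))))"
    and K_lt: "K < 1"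
    and bound: "opnorm (matrix_inv Z ** (\<Sum>j<d2. cmat_adj (B j - mat (nu j)) ** C j
                   + cmat_adj (C j) ** (B j - mat (nu j)) + cmat_adj (C j) ** C j) ** matrix_inv Z) \<le> K"
  shows "sqrt (1 - K) * mu_RQ d1 d2 lam nu A B \<le> mu_RQ d1 d2 lam nu A (\<lambda>j. B j + C j)
       \<and> mu_RQ d1 d2 lam nu A (\<lambda>j. B j + C j) \<le> sqrt (1 + K) * mu_RQ d1 d2 lam nu A B"
proof -
  let ?R = "RQ d1 d2 lam nu A B" and ?R' = "RQ d1 d2 lam nu A (\<lambda>j. B j + C j)"
  have Z_herm: "hermitian_cmat Z" using Z_pd by (simp add: posdef_cmat_def)
  have "invertible Z" using Z2_inv unfolding Z_sq [symmetric] by (rule invertible_mult_imp_left)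
  have K_nonneg: "0 \<le> K" using opnorm_nonneg bound by (rule order_trans)
  have R_bound: "K * (norm (Z *v v))\<^sup>2 \<le> K * (v \<bullet> (?R *v v))" for v
    by (intro mult_left_mono norm_square_root_le_inner_RQ[OF Z_herm Z_sq] K_nonneg)
  have perturbation: "\<bar>v \<bullet> (?R' *v v) - v \<bullet> (?R *v v)\<bar> \<le> K * (v \<bullet> (?R *v v))" for v
    unfolding inner_RQ_add
    using order_trans[OF abs_inner_le_opnorm_congruence[OF Z_herm \<open>invertible Z\<close> bound] R_bound]
    by simp
  have lower: "(1 - K) * (v \<bullet> (?R *v v)) \<le> v \<bullet> (?R' *v v)" for v
    using perturbation[of v] by (simp add: abs_le_iff left_diff_distrib)
  have upper: "v \<bullet> (?R' *v v) \<le> (1 + K) * (v \<bullet> (?R *v v))" for v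
    using perturbation[of v] by (simp add: abs_le_iff distrib_right)
  have sym: "inner_symmetric ?R" "inner_symmetric ?R'"
    using herm by (simp_all add: inner_symmetric_RQ)
  have "(1 - K) * lambda_min ?R \<le> lambda_min ?R'"
    using K_lt by (intro lambda_min_scaled_le sym lower) simp
  then have "sqrt (1 - K) * sqrt (lambda_min ?R) \<le> sqrt (lambda_min ?R')"
    by (metis real_sqrt_le_mono real_sqrt_mult)
  moreover have "lambda_min ?R' \<le> (1 + K) * lambda_min ?R"
    by (intro lambda_min_le_scaled sym upper)
  then have "sqrt (lambda_min ?R') \<le> sqrt (1 + K) * sqrt (lambda_min ?R)"
    by (metis real_sqrt_le_mono real_sqrt_mult)
  ultimately show ?thesis unfolding mu_RQ_def ..
qed

end
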